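(* Let $b,m>1$ be integers with $\gcd(b,m)=1$, and let $\frac{1}{m}=(0.\,a_1a_2\cdots a_i\cdots)_b$ be the base-$b$ expansion of $\frac1m$ (so $\frac1m=\sum_{i\ge1}a_ib^{-i}$ with digits $a_i\in\{0,\dots,b-1\}$). Then for every positive integer $t$, the base-$(b+mt)$ expansion of $\frac1m$ is \[ \tfrac{1}{m}=(0.\,a'_1a'_2\cdots a'_i\cdots)_{b+mt}, \] where for each $i\ge1$, $a'_i=a_i+t\,k_i$ with $k_i=(b^{i-1}\bmod m)$.
   Context: For integers $x$ and $m>0$, $x \bmod m$ denotes the least nonnegative residue of $x$ modulo $m$. The notation $(0.\,c_1c_2\cdots)_B$ denotes the number $\sum_{i\ge1}c_iB^{-i}$ with digits $c_i\in\{0,\dots,B-1\}$. *)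

theory Defs
  imports Complex_Main
begin

definition is_base_expansion :: "nat \<Rightarrow> (nat \<Rightarrow> nat) \<Rightarrow> real \<Rightarrow> bool" where
  "is_base_expansion B c x \<longleftrightarrow>
     (\<forall>i\<ge>1. c i < B) \<and> (\<lambda>n. real (c (Suc n)) / real B ^ Suc n) sums x"

end

theory Submission
  imports Defs
begin

text \<open>In base \<open>B\<close> long division produces the digits \<open>\<lfloor>B r\<^sub>i\<^sub>-\<^sub>1 / m\<rfloor>\<close> of \<open>1/m\<close>, where
  \<open>r\<^sub>i = B\<^sup>i mod m\<close> are the successive remainders. When \<open>gcd(B, m) = 1\<close> the number \<open>1/m\<close>
  is not a \<open>B\<close>-adic fraction, so the integer formed by the first \<open>n\<close> digits of any expansion
  of \<open>1/m\<close> must be \<open>\<lfloor>B\<^sup>n/m\<rfloor>\<close>, and the long-division expansion is the only one.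
  Replacing \<open>b\<close> by \<open>b + m t\<close> leaves every remainder \<open>B\<^sup>i mod m\<close> unchanged and therefore
  adds exactly \<open>t (b\<^sup>i\<^sup>-\<^sup>1 mod m)\<close> to the \<open>i\<close>-th digit.\<close>

definition inverse_digit :: "nat \<Rightarrow> nat \<Rightarrow> nat \<Rightarrow> nat" where
  "inverse_digit B m i = B * (B ^ (i - 1) mod m) div m"

lemma inverse_digit_Suc [simp]: "inverse_digit B m (Suc n) = B * (B ^ n mod m) div m"
  by (simp add: inverse_digit_def)

lemma inverse_digit_less:
  assumes "B > 0" and "m > 0"
  shows "inverse_digit B m i < B"
proof -
  have "B * (B ^ (i - 1) mod m) < B * m"
    using assms by simp
  then show ?thesis
    by (simp add: inverse_digit_def div_less_iff_less_mult)
qed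

lemma inverse_digit_add_mult_base:
  assumes "m > 0"
  shows "inverse_digit (B + m * t) m i = inverse_digit B m i + t * (B ^ (i - 1) mod m)"
proof -
  have "(B + m * t) ^ (i - 1) mod m = B ^ (i - 1) mod m"
    by (metis mod_mult_self2 power_mod)
  moreover have "(B + m * t) * r div m = B * r div m + t * r" for r
    using assms by (simp add: algebra_simps)
  ultimately show ?thesis
    by (simp add: inverse_digit_def)
qed

lemma sum_inverse_digits:
  assumes "B > 0" and "m > 1"
  shows "(\<Sum>k<n. real (inverse_digit B m (Suc k)) / real B ^ Suc k)
         = 1 / real m - real (B ^ n mod m) / (real m * real B ^ n)"
proof (induction n)
  case 0
  then show ?case using assms by simp
next
  case (Suc n)
  have "B * (B ^ n mod m) = m * (B * (B ^ n mod m) div m) + B ^ Suc n mod m"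
    by (metis mod_mult_right_eq mult.commute mult_div_mod_eq power_Suc)
  then have "real B * real (B ^ n mod m)
             = real m * real (inverse_digit B m (Suc n)) + real (B ^ Suc n mod m)"
    by (simp flip: of_nat_mult of_nat_add)
  then have "real (inverse_digit B m (Suc n)) / real B ^ Suc n
             = real (B ^ n mod m) / (real m * real B ^ n)
               - real (B ^ Suc n mod m) / (real m * real B ^ Suc n)"
    using assms by (simp add: field_simps)
  then show ?case using Suc by simp
qed

lemma is_base_expansion_inverse_digit:
  assumes "B > 1" and "m > 1"
  shows "is_base_expansion B (inverse_digit B m) (1 / real m)"
proof -
  have B_pos: "B > 0"
    using assms(1) by simp
  have "(\<lambda>n. real (B ^ n mod m) / (real m * real B ^ n)) \<longlonglongrightarrow> 0"
  proof (rule tendsto_sandwich[OF _ _ tendsto_const LIMSEQ_realpow_zero[of "1 / real B"]])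
    show "\<forall>\<^sub>F n in sequentially. 0 \<le> real (B ^ n mod m) / (real m * real B ^ n)"
      by simp
    have "real (B ^ n mod m) / (real m * real B ^ n) \<le> real m / (real m * real B ^ n)" for n
      using assms by (intro divide_right_mono) auto
    then show "\<forall>\<^sub>F n in sequentially. real (B ^ n mod m) / (real m * real B ^ n) \<le> (1 / real B) ^ n"
      using assms by (simp add: power_one_over)
  qed (use assms in auto)
  then have "(\<lambda>n. 1 / real m - real (B ^ n mod m) / (real m * real B ^ n)) \<longlonglongrightarrow> 1 / real m"
    using tendsto_diff[OF tendsto_const] by fastforce
  then have "(\<lambda>n. \<Sum>k<n. real (inverse_digit B m (Suc k)) / real B ^ Suc k) \<longlonglongrightarrow> 1 / real m"
    unfolding sum_inverse_digits[OF B_pos assms(2)] .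
  moreover have "\<forall>i\<ge>1. inverse_digit B m i < B"
    using inverse_digit_less[OF B_pos] assms(2) by simp
  ultimately show ?thesis
    unfolding is_base_expansion_def sums_def by blast
qed

lemma is_base_expansion_cong:
  assumes "\<forall>i\<ge>1. c i = c' i"
  shows "is_base_expansion B c x \<longleftrightarrow> is_base_expansion B c' x"
  using assms by (simp add: is_base_expansion_def)

lemma base_expansion_remainder_bounds:
  fixes n :: nat
  assumes "B > 1" and "is_base_expansion B c x"
  defines "S \<equiv> \<Sum>k<n. real (c (Suc k)) / real B ^ Suc k"
  shows "S \<le> x" and "x \<le> S + 1 / real B ^ n"
proof -
  let ?f = "\<lambda>k. real (c (Suc k)) / real B ^ Suc k"
  have digits: "c i < B" if "i \<ge> 1" for i
    using assms(2) that by (simp add: is_base_expansion_def)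
  have "?f sums x"
    using assms(2) by (simp add: is_base_expansion_def)
  then have tail: "(\<lambda>k. ?f (k + n)) sums (x - S)"
    unfolding S_def by (rule sums_split_initial_segment)
  show "S \<le> x"
    using sums_le[OF _ sums_zero tail] by simp
  let ?g = "\<lambda>k. (real B - 1) / real B ^ Suc n * (1 / real B) ^ k"
  have "?g sums ((real B - 1) / real B ^ Suc n * (1 / (1 - 1 / real B)))"
    using assms(1) by (intro sums_mult geometric_sums) auto
  also have "(real B - 1) / real B ^ Suc n * (1 / (1 - 1 / real B)) = 1 / real B ^ n"
    using assms(1) by (simp add: field_simps)
  finally have geometric: "?g sums (1 / real B ^ n)" .
  have "?f (k + n) \<le> ?g k" for k
  proof -
    have "real (c (Suc (k + n))) \<le> real B - 1"
      using digits[of "Suc (k + n)"] by linarith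
    then have "?f (k + n) \<le> (real B - 1) / real B ^ Suc (k + n)"
      using assms(1) by (intro divide_right_mono) auto
    also have "\<dots> = ?g k"
      using assms(1) by (simp add: power_add power_one_over field_simps)
    finally show ?thesis .
  qed
  then show "x \<le> S + 1 / real B ^ n"
    using sums_le[OF _ tail geometric] by simp
qed

fun expansion_prefix :: "nat \<Rightarrow> (nat \<Rightarrow> nat) \<Rightarrow> nat \<Rightarrow> nat" where
  "expansion_prefix B c 0 = 0"
| "expansion_prefix B c (Suc n) = B * expansion_prefix B c n + c (Suc n)"

lemma of_nat_expansion_prefix:
  assumes "B > 0"
  shows "real (expansion_prefix B c n) = real B ^ n * (\<Sum>k<n. real (c (Suc k)) / real B ^ Suc k)"
  by (induction n) (use assms in \<open>simp_all add: field_simps\<close>)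

lemma expansion_prefix_bounds:
  assumes "B > 1" and "is_base_expansion B c x"
  shows "real (expansion_prefix B c n) \<le> real B ^ n * x"
    and "real B ^ n * x \<le> real (expansion_prefix B c n) + 1"
proof -
  note bounds = base_expansion_remainder_bounds[OF assms, of n]
  have pos: "real B ^ n > 0"
    using assms(1) by simp
  show "real (expansion_prefix B c n) \<le> real B ^ n * x"
    using mult_left_mono[OF bounds(1) less_imp_le[OF pos]] assms(1)
    by (simp add: of_nat_expansion_prefix)
  show "real B ^ n * x \<le> real (expansion_prefix B c n) + 1"
    using mult_left_mono[OF bounds(2) less_imp_le[OF pos]] pos assms(1)
    by (simp add: of_nat_expansion_prefix distrib_left)
qed

lemma expansion_prefix_inverse:
  assumes "B > 1" and "m > 0" and "\<not> m dvd B ^ n"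
    and "is_base_expansion B c (1 / real m)"
  shows "expansion_prefix B c n = B ^ n div m"
proof (rule sym, rule div_nat_eqI)
  let ?N = "expansion_prefix B c n"
  note bounds = expansion_prefix_bounds[OF assms(1,4), of n]
  have "real (m * ?N) \<le> real (B ^ n)"
    using bounds(1) assms(2) by (simp add: field_simps)
  then show "m * ?N \<le> B ^ n"
    by linarith
  have "real (B ^ n) \<le> real (m * Suc ?N)"
    using bounds(2) assms(2) by (simp add: field_simps)
  moreover have "B ^ n \<noteq> m * Suc ?N"
    using assms(3) by auto
  ultimately show "B ^ n < m * Suc ?N"
    by linarith
qed

lemma base_expansion_inverse_unique:
  assumes "B > 1" and "m > 1" and "coprime B m"
    and "is_base_expansion B c (1 / real m)" and "i \<ge> 1"
  shows "c i = inverse_digit B m i"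
proof -
  obtain n where i: "i = Suc n"
    using assms(5) by (cases i) auto
  have not_dvd: "\<not> m dvd B ^ k" for k
  proof
    assume "m dvd B ^ k"
    moreover have "coprime m (B ^ k)"
      using assms(3) by (simp add: coprime_commute)
    ultimately have "is_unit m"
      using coprime_absorb_left by blast
    then show False
      using assms(2) by simp
  qed
  have prefix: "expansion_prefix B c k = B ^ k div m" for k
    using assms(2) by (intro expansion_prefix_inverse[OF assms(1) _ not_dvd assms(4)]) simp
  have quotient_step: "B ^ Suc n div m = B * (B ^ n div m) + inverse_digit B m i"
  proof -
    have "B ^ Suc n = m * (B * (B ^ n div m)) + B * (B ^ n mod m)"
      by (metis add_mult_distrib2 mult.left_commute mult_div_mod_eq power_Suc)
    then show ?thesis
      using assms(2) i by simp
  qed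
  have "c i = expansion_prefix B c (Suc n) - B * expansion_prefix B c n"
    using i by simp
  also have "\<dots> = B ^ Suc n div m - B * (B ^ n div m)"
    by (simp only: prefix)
  also have "\<dots> = inverse_digit B m i"
    using quotient_step by simp
  finally show ?thesis .
qed

theorem theorem1:
  fixes b m :: nat and a :: "nat \<Rightarrow> nat"
  assumes "b > 1" and "m > 1" and "coprime b m"
    and "is_base_expansion b a (1 / real m)"
  shows "\<forall>t::nat. t > 0 \<longrightarrow>
           is_base_expansion (b + m * t) (\<lambda>i. a i + t * (b ^ (i - 1) mod m)) (1 / real m)"
proof (intro allI impI)
  fix t :: nat
  have "\<forall>i\<ge>1. inverse_digit (b + m * t) m i = a i + t * (b ^ (i - 1) mod m)"
    using base_expansion_inverse_unique[OF assms] inverse_digit_add_mult_base assms(2) by simp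
  moreover have "is_base_expansion (b + m * t) (inverse_digit (b + m * t) m) (1 / real m)"
    using is_base_expansion_inverse_digit assms(1,2) by simp
  ultimately show "is_base_expansion (b + m * t) (\<lambda>i. a i + t * (b ^ (i - 1) mod m)) (1 / real m)"
    by (rule is_base_expansion_cong[THEN iffD1])
qed

end
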